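(* Let $\Sigma$ be a finite alphabet and $w = w[1]w[2]\cdots w[n] \in \Sigma^*$ with $n \ge 1$. Algorithm A (described in the context) run on input $w$ returns TRUE if and only if $w \in L_{\mathrm{UNIQ}}$, i.e. if and only if $w$ is uniquely decodable from its bigrams.
   Context: Let $\$ \notin \Sigma$ be a delimiter symbol and $\Sigma_\$ = \Sigma \cup \{\$\}$. For a string $x \in \$\Sigma^*\$$, its bigram vector $\Phi(x) \in \mathbb{N}^{\Sigma_\$^2}$ records, for each pair $(c,d) \in \Sigma_\$^2$, the number of indices $j$ with $x[j]x[j+1] = cd$ (occurrences as a contiguous substring, counting overlaps). A string $w \in \Sigma^*$ is uniquely decodable, written $w \in L_{\mathrm{UNIQ}}$, if the only string $x \in \$\Sigma^*\$$ with $\Phi(x) = \Phi(\$w\$)$ is $x = \$w\$$. Algorithm A (input $w \in \Sigma^*$ of length $n$). It maintains: a "visited" flag for each $v \in \Sigma$; an "on a cycle" flag for each $v \in \Sigma$; and a directed graph $G$ with vertex set $\Sigma$ in which each ordered pair is either an edge or not. Initially no letter is visited, no letter is on a cycle, and $G$ has no edges. Mark $w[1]$ as visited. Then for $i = 2, \dots, n$: (1) If $w[i]$ has not been visited, mark it as visited. Otherwise, if the edge $w[i-1] \to w[i]$ is not already in $G$: if $w[i]$ is marked as on a cycle, return FALSE; otherwise mark $w[i]$ and all letters $w[j]$ for $j$ strictly between the previous occurrence of $w[i]$ (the largest $j_0 < i$ with $w[j_0] = w[i]$) and $i$ as on a cycle. (If the edge $w[i-1] \to w[i]$ is already in $G$,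 do nothing in this step.) (2) If there exist two distinct vertices $a, b \in \Sigma$ such that $a \to w[i]$ and $b \to w[i]$ are edges of $G$ and $a, b$ lie in the same strongly connected component of $G$ (where $a = w[i]$ or $b = w[i]$ is allowed), return FALSE. (3) Add the edge $w[i-1] \to w[i]$ to $G$. After the loop, return TRUE. *)

theory Defs
  imports Main
begin

text \<open>The delimiter $ is modelled as None in the type 'a option; letters of the
alphabet are Some a.  A string in $Sigma^*$ is thus the list
None # map Some u @ [None] for some u :: 'a list.\<close>

definition delim :: "'a list \<Rightarrow> 'a option list" where
  "delim u = None # map Some u @ [None]"

definition bigram_vec :: "'b list \<Rightarrow> ('b \<times> 'b) \<Rightarrow> nat" where
  "bigram_vec x = (\<lambda>(c, d). card {j. Suc j < length x \<and> x ! j = c \<and> x ! Suc j = d})"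

definition L_UNIQ :: "'a list set" where
  "L_UNIQ = {w. \<forall>x. (\<exists>u. x = delim u) \<and> bigram_vec x = bigram_vec (delim w) \<longrightarrow> x = delim w}"

text \<open>Algorithm A.  Positions are 0-based: w ! 0 is w[1]; loop index k = i - 1.
State: (visited, on_cycle, G); None means FALSE has been returned.\<close>

definition prev_occ :: "'a list \<Rightarrow> nat \<Rightarrow> nat" where
  "prev_occ w k = Max {j. j < k \<and> w ! j = w ! k}"

definition same_scc :: "('a \<times> 'a) set \<Rightarrow> 'a \<Rightarrow> 'a \<Rightarrow> bool" where
  "same_scc G a b \<longleftrightarrow> (a, b) \<in> G\<^sup>* \<and> (b, a) \<in> G\<^sup>*"

definition algA_step ::
  "'a list \<Rightarrow> ('a set \<times> 'a set \<times> ('a \<times> 'a) set) option \<Rightarrow> nat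
    \<Rightarrow> ('a set \<times> 'a set \<times> ('a \<times> 'a) set) option" where
  "algA_step w s k = (case s of None \<Rightarrow> None | Some (vis, cyc, G) \<Rightarrow>
     (let c = w ! k; p = w ! (k - 1);
          r1 = (if c \<notin> vis then Some (insert c vis, cyc)
                else if (p, c) \<in> G then Some (vis, cyc)
                else if c \<in> cyc then None
                else Some (vis, cyc \<union> {c} \<union> {w ! j | j. prev_occ w k < j \<and> j < k}))
      in case r1 of None \<Rightarrow> None
         | Some (vis', cyc') \<Rightarrow>
             if (\<exists>a b. a \<noteq> b \<and> (a, c) \<in> G \<and> (b, c) \<in> G \<and> same_scc G a b) then None
             else Some (vis', cyc', insert (p, c) G)))"

definition algA :: "'a list \<Rightarrow> bool" where
  "algA w = (fold (\<lambda>k s. algA_step w s k) [1..<length w] (Some ({w ! 0}, {}, {})) \<noteq> None)"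

end

theory Submission
  imports Defs "HOL-Library.Multiset"
begin

text \<open>
  A word is ambiguous exactly when it admits a swap: positions i < j \<le> k < t with w[i] = w[k],
  w[j] = w[t] and w[j-1] \<noteq> w[t-1].  Writing w = A X1 M X2 E with X1 = w[i..j) and X2 = w[k..t),
  the word A X2 M X1 E has the same bigrams, also after adding the delimiters, but a different
  letter before position t.  Conversely, if two different delimited words have the same bigrams,
  let m be the last position where they differ.  The bigram (x'[m], x[m+1]) then occurs in x at
  some earlier position j-1, j; if no letter occurred both before j and in x[j..m], the letters of
  x[j..m] would be closed under the bigrams of both prefixes of length m+1, forcing x'[m] into this
  set.  So x has a swap ending at m+1.

  Algorithm A keeps, for the prefix w[0..t), its letters, the graph G of its bigrams and the
  letters on cycles of G.  A swap ending at t puts w[t] on a cycle of G; by induction on t the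
  algorithm fails exactly at the first t at which a swap ends: through test (1) if the edge
  w[t-1] \<rightarrow> w[t] is new, and through test (2) if it is already present.
\<close>

definition bigrams :: "'b list \<Rightarrow> ('b \<times> 'b) multiset" where
  "bigrams x = mset (zip x (tl x))"

lemma count_bigrams: "count (bigrams x) (c, d) = bigram_vec x (c, d)"
proof -
  have "count (bigrams x) (c, d) = length (filter ((=) (c, d)) (zip x (tl x)))"
    by (simp add: bigrams_def count_mset count_list_eq_length_filter)
  also have "\<dots> = card {i. i < length (zip x (tl x)) \<and> (c, d) = zip x (tl x) ! i}"
    by (simp add: length_filter_conv_card)
  also have "\<dots> = card {j. Suc j < length x \<and> x ! j = c \<and> x ! Suc j = d}"
    by (rule arg_cong[where f = card]) (auto simp: nth_tl)
  finally show ?thesis by (simp add: bigram_vec_def)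
qed

lemma bigram_vec_eq_iff_bigrams: "bigram_vec x = bigram_vec y \<longleftrightarrow> bigrams x = bigrams y"
  by (metis count_bigrams ext multiset_eqI surj_pair)

lemma in_bigrams_iff: "p \<in># bigrams x \<longleftrightarrow> (\<exists>s. Suc s < length x \<and> p = (x ! s, x ! Suc s))"
proof
  assume "p \<in># bigrams x"
  then obtain i where "i < length x - 1" "p = (x ! i, x ! Suc i)"
    by (auto simp: bigrams_def in_set_conv_nth nth_tl)
  then show "\<exists>s. Suc s < length x \<and> p = (x ! s, x ! Suc s)" by (intro exI[of _ i]) auto
next
  assume "\<exists>s. Suc s < length x \<and> p = (x ! s, x ! Suc s)"
  then obtain s where "Suc s < length x" "p = (x ! s, x ! Suc s)" by blast
  then show "p \<in># bigrams x"
    by (auto simp: bigrams_def in_set_conv_nth nth_tl intro!: exI[of _ s])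
qed

lemma size_bigrams: "size (bigrams x) = length x - 1"
  by (simp add: bigrams_def)

lemma bigrams_append:
  "bigrams (xs @ ys) =
     bigrams xs + bigrams ys + (if xs = [] \<or> ys = [] then {#} else {#(last xs, hd ys)#})"
proof (induction xs)
  case Nil
  then show ?case by (simp add: bigrams_def)
next
  case (Cons a xs)
  then show ?case by (cases xs; cases ys) (auto simp: bigrams_def)
qed

lemma bigrams_take_drop:
  assumes "Suc m < length x"
  shows "bigrams x = bigrams (take (Suc m) x) + bigrams (drop (Suc m) x) + {#(x ! m, x ! Suc m)#}"
  using bigrams_append[of "take (Suc m) x" "drop (Suc m) x"] assms
  by (auto simp: last_conv_nth hd_drop_conv_nth min_def)

lemma bigrams_map: "bigrams (map f x) = image_mset (map_prod f f) (bigrams x)"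
  by (simp add: bigrams_def map_tl[symmetric] zip_map_map map_prod_def)

lemma bigrams_delim:
  assumes "u \<noteq> []"
  shows "bigrams (delim u) =
    image_mset (map_prod Some Some) (bigrams u) + {#(None, Some (hd u)), (Some (last u), None)#}"
  using assms bigrams_append[of "None # map Some u" "[None]"] bigrams_append[of "[None]" "map Some u"]
  by (simp add: delim_def bigrams_map hd_map last_map bigrams_def[of "[None]"])

lemma bigrams_swap_factors:
  assumes "X1 \<noteq> []" "X2 \<noteq> []" "E \<noteq> []" "hd X1 = hd X2" "hd (M @ X1) = hd E"
  shows "bigrams (P @ X1 @ M @ X2 @ E) = bigrams (P @ X2 @ M @ X1 @ E)"
  using assms by (cases "M = []"; cases "P = []") (simp_all add: bigrams_append ac_simps)

lemma bigrams_closed_walk: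
  assumes closed: "\<And>x y. (x, y) \<in># bigrams v \<Longrightarrow> x \<in> Q \<Longrightarrow> y \<in> Q"
    and "s \<le> s'" "s' < length v" "v ! s \<in> Q"
  shows "v ! s' \<in> Q"
  using assms(2-)
proof (induction s' rule: dec_induct)
  case base
  then show ?case by simp
next
  case (step n)
  then have "(v ! n, v ! Suc n) \<in># bigrams v" by (auto simp: in_bigrams_iff)
  with step closed show ?case by simp
qed

definition swappable_at :: "'b list \<Rightarrow> nat \<Rightarrow> bool" where
  "swappable_at w t \<longleftrightarrow> (\<exists>j i k. 1 \<le> j \<and> j < t \<and> w ! j = w ! t \<and> w ! (j - 1) \<noteq> w ! (t - 1) \<and>
                          i < j \<and> j \<le> k \<and> k < t \<and> w ! i = w ! k)"

definition separated_at :: "'b list \<Rightarrow> nat \<Rightarrow> nat \<Rightarrow> bool" where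
  "separated_at w j t \<longleftrightarrow> (\<forall>i k. i < j \<longrightarrow> j \<le> k \<longrightarrow> k < t \<longrightarrow> w ! i \<noteq> w ! k)"

lemma swappable_at_of_separated:
  assumes "1 \<le> j" "j < t" "w ! j = w ! t" "\<not> separated_at w j t"
    "w ! (j - 1) \<noteq> w ! (t - 1)"
  shows "swappable_at w t"
  using assms unfolding separated_at_def swappable_at_def by blast

lemma take_drop_chain:
  assumes "i \<le> j" "j \<le> k" "k \<le> t"
  shows "take i x @ drop i (take j x) @ drop j (take k x) @ drop k (take t x) @ drop t x = x"
proof -
  have "take j x = take i x @ drop i (take j x)"
    using assms by (metis append_take_drop_id min.absorb1 take_take)
  moreover have "take k x = take j x @ drop j (take k x)"
    using assms by (metis append_take_drop_id min.absorb1 take_take)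
  moreover have "take t x = take k x @ drop k (take t x)"
    using assms by (metis append_take_drop_id min.absorb1 take_take)
  ultimately show ?thesis by (metis append.assoc append_take_drop_id)
qed

lemma swappable_at_bigram_twin:
  assumes swap: "swappable_at x t" and t: "t < length x"
  shows "\<exists>y. y \<noteq> x \<and> length y = length x \<and> hd y = hd x \<and> last y = last x \<and> bigrams y = bigrams x"
proof -
  obtain j i k where jik: "1 \<le> j" "j < t" "x ! j = x ! t" "x ! (j - 1) \<noteq> x ! (t - 1)"
    "i < j" "j \<le> k" "k < t" "x ! i = x ! k"
    using swap unfolding swappable_at_def by blast
  define A where "A = take i x"
  define X1 where "X1 = drop i (take j x)"
  define M where "M = drop j (take k x)"
  define X2 where "X2 = drop k (take t x)"
  define E where "E = drop t x"
  have x_eq: "x = A @ X1 @ M @ X2 @ E"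
    using take_drop_chain[of i j k t x] jik unfolding A_def X1_def M_def X2_def E_def by simp
  define y where "y = A @ X2 @ M @ X1 @ E"
  have ne: "X1 \<noteq> []" "X2 \<noteq> []" "E \<noteq> []"
    using jik t by (auto simp: X1_def X2_def E_def)
  have hd_X: "hd X1 = x ! i" "hd X2 = x ! k"
    using jik t by (simp_all add: X1_def X2_def hd_drop_conv_nth)
  have "hd (M @ X1) = hd E"
    using jik t hd_X by (cases "j = k") (auto simp: M_def E_def hd_drop_conv_nth)
  then have "bigrams y = bigrams x"
    unfolding x_eq y_def using ne hd_X jik by (intro bigrams_swap_factors[symmetric]) auto
  moreover have "hd y = hd x"
    unfolding x_eq y_def using ne hd_X jik by (cases A) auto
  moreover have "last y = last x"
    unfolding x_eq y_def using ne by simp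
  moreover have "length y = length x"
    unfolding x_eq y_def by simp
  moreover have "y \<noteq> x"
  proof
    assume "y = x"
    have "length A + length X2 + length M + length X1 = t"
      using jik t by (simp add: A_def X1_def M_def X2_def)
    then have "take t y = A @ X2 @ M @ X1" by (simp add: y_def)
    moreover have "last X1 = x ! (j - 1)"
      using jik t by (simp add: X1_def last_conv_nth)
    ultimately have "last (take t y) = x ! (j - 1)" using ne by simp
    moreover have "last (take t x) = x ! (t - 1)"
      using jik t last_conv_nth[of "take t x"] by (cases x) auto
    ultimately show False using \<open>y = x\<close> jik by simp
  qed
  ultimately show ?thesis by blast
qed

lemma separated_at_bigrams_closed:
  assumes sep: "separated_at x j (length x)" and xy: "(a, b) \<in># bigrams x"
    and a: "a \<in> {x ! p | p. j \<le> p \<and> p < length x}"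
  shows "b \<in> {x ! p | p. j \<le> p \<and> p < length x}"
proof -
  obtain r where r: "Suc r < length x" "a = x ! r" "b = x ! Suc r"
    using xy by (auto simp: in_bigrams_iff)
  obtain p where p: "j \<le> p" "p < length x" "a = x ! p" using a by blast
  have "j \<le> r"
  proof (rule ccontr)
    assume "\<not> j \<le> r"
    then have "x ! r \<noteq> x ! p" using sep p(1,2) unfolding separated_at_def by auto
    then show False using p(3) r(2) by simp
  qed
  then show ?thesis using r by auto
qed

text \<open>
  If the letters of T from position j on did not occur before j, they would be closed under the
  bigrams of T and hence of T'; the walk in T' starting at the occurrence of (last T, c) would then
  end in last T' = T[j-1].
\<close>

lemma bigram_redirect_not_separated:
  assumes eq: "bigrams T + {#(last T, c)#} = bigrams T' + {#(last T', c)#}"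
    and last_ne: "last T \<noteq> last T'" and len: "length T = length T'"
  shows "\<exists>j. 1 \<le> j \<and> j < length T \<and> T ! j = c \<and> T ! (j - 1) = last T' \<and>
             \<not> separated_at T j (length T)"
proof -
  define n where "n = length T"
  have "T \<noteq> []" "T' \<noteq> []" using last_ne len by auto
  then have last_T: "last T = T ! (n - 1)" and last_T': "last T' = T' ! (n - 1)" and "0 < n"
    using len by (simp_all add: n_def last_conv_nth)
  have "(last T', c) \<in># bigrams T + {#(last T, c)#}" unfolding eq by simp
  then have "(last T', c) \<in># bigrams T" using last_ne by auto
  then obtain s where s: "Suc s < n" "T ! s = last T'" "T ! Suc s = c"
    by (auto simp: in_bigrams_iff n_def)
  have "\<not> separated_at T (Suc s) n"
  proof
    assume sep: "separated_at T (Suc s) n"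
    define Q where "Q = {T ! p | p. Suc s \<le> p \<and> p < n}"
    have "c \<in> Q" "last T \<in> Q" using s last_T unfolding Q_def by auto
    have closed_T': "y \<in> Q" if "(x, y) \<in># bigrams T'" "x \<in> Q" for x y
    proof -
      have "(x, y) \<in># bigrams T + {#(last T, c)#}" using eq that(1) by simp
      then consider "(x, y) \<in># bigrams T" | "y = c" by auto
      then show ?thesis
      proof cases
        case 1
        then show ?thesis
          using separated_at_bigrams_closed[of T "Suc s" x y] sep that(2) unfolding Q_def n_def
          by blast
      next
        case 2
        then show ?thesis using \<open>c \<in> Q\<close> by simp
      qed
    qed
    have "(last T, c) \<in># bigrams T' + {#(last T', c)#}" unfolding eq[symmetric] by simp
    then have "(last T, c) \<in># bigrams T'" using last_ne by auto
    then obtain s0 where s0: "Suc s0 < n" "T' ! s0 = last T"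
      by (auto simp: in_bigrams_iff n_def len)
    have "T' ! (n - 1) \<in> Q"
    proof (rule bigrams_closed_walk[where v = T' and Q = Q])
      show "y \<in> Q" if "(x, y) \<in># bigrams T'" "x \<in> Q" for x y
        using closed_T' that .
      show "s0 \<le> n - 1" "n - 1 < length T'" "T' ! s0 \<in> Q"
        using s0 len \<open>0 < n\<close> \<open>last T \<in> Q\<close> by (simp_all add: n_def)
    qed
    then obtain p where "Suc s \<le> p" "p < n" "T ! s = T ! p"
      using s last_T' unfolding Q_def by auto
    moreover have "s < Suc s" by simp
    ultimately show False using sep unfolding separated_at_def by metis
  qed
  then show ?thesis using s unfolding n_def by (intro exI[of _ "Suc s"]) auto
qed

lemma last_mismatch:
  assumes len: "length v = length v'" and ne: "v \<noteq> v'" and last: "last v = last v'"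
  shows "\<exists>m. Suc m < length v \<and> v ! m \<noteq> v' ! m \<and> drop (Suc m) v = drop (Suc m) v'"
proof -
  define D where "D = {s. s < length v \<and> v ! s \<noteq> v' ! s}"
  define m where "m = Max D"
  have "D \<noteq> {}" using len ne nth_equalityI unfolding D_def by blast
  moreover have "finite D" unfolding D_def by simp
  ultimately have "m \<in> D" and m_max: "\<And>s. s \<in> D \<Longrightarrow> s \<le> m"
    unfolding m_def by simp_all
  then have m: "m < length v" "v ! m \<noteq> v' ! m" unfolding D_def by simp_all
  have "v \<noteq> []" using ne len by auto
  then have "m \<noteq> length v - 1"
    using m last len last_conv_nth[of v] last_conv_nth[of v'] by force
  then have "Suc m < length v" using m by linarith
  moreover have "drop (Suc m) v = drop (Suc m) v'"
  proof (rule nth_equalityI)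
    show "length (drop (Suc m) v) = length (drop (Suc m) v')" using len by simp
    fix i assume "i < length (drop (Suc m) v)"
    then show "drop (Suc m) v ! i = drop (Suc m) v' ! i"
      using m_max[of "Suc m + i"] len unfolding D_def by fastforce
  qed
  ultimately show ?thesis using m by blast
qed

lemma bigram_twins_swappable_at:
  assumes len: "length v = length v'" and ne: "v \<noteq> v'"
    and bg: "bigrams v = bigrams v'" and last: "last v = last v'"
  shows "\<exists>t<length v. swappable_at v t"
proof -
  obtain m where m: "Suc m < length v" "v ! m \<noteq> v' ! m"
    and suffix: "drop (Suc m) v = drop (Suc m) v'"
    using last_mismatch[OF len ne last] by blast
  then have same_next: "v' ! Suc m = v ! Suc m"
    using len by (metis hd_drop_conv_nth)
  define T where "T = take (Suc m) v"
  define T' where "T' = take (Suc m) v'"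
  have last_T: "last T = v ! m" and last_T': "last T' = v' ! m"
    using m len by (simp_all add: T_def T'_def take_Suc_conv_app_nth)
  have "bigrams T + {#(last T, v ! Suc m)#} = bigrams T' + {#(last T', v ! Suc m)#}"
    unfolding last_T last_T'
    using bg bigrams_take_drop[OF m(1)] bigrams_take_drop[of m v'] m len same_next suffix
    by (simp add: T_def T'_def ac_simps)
  moreover have "last T \<noteq> last T'" using m unfolding last_T last_T' by simp
  moreover have "length T = length T'" using len by (simp add: T_def T'_def)
  ultimately obtain j where j: "1 \<le> j" "j < length T" "T ! j = v ! Suc m"
    "T ! (j - 1) = v' ! m" "\<not> separated_at T j (length T)"
    using bigram_redirect_not_separated last_T' by metis
  have "length T = Suc m" using m by (simp add: T_def)
  then have "\<not> separated_at v j (Suc m)"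
    using j(5) unfolding separated_at_def T_def by auto
  then have "swappable_at v (Suc m)"
    using j m \<open>length T = Suc m\<close> unfolding T_def by (intro swappable_at_of_separated) auto
  then show ?thesis using m by blast
qed

lemma nth_delim:
  "s < length w + 2 \<Longrightarrow> delim w ! s = (if s = 0 \<or> length w < s then None else Some (w ! (s - 1)))"
  by (cases s) (auto simp: delim_def nth_append)

lemma swappable_at_delim:
  assumes swap: "swappable_at (delim w) t" and t: "t < length (delim w)"
  shows "\<exists>s<length w. swappable_at w s"
proof -
  obtain j i k where jik: "1 \<le> j" "j < t" "delim w ! j = delim w ! t"
    "delim w ! (j - 1) \<noteq> delim w ! (t - 1)" "i < j" "j \<le> k" "k < t" "delim w ! i = delim w ! k"
    using swap unfolding swappable_at_def by blast
  have len: "length (delim w) = length w + 2" by (simp add: delim_def)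
  have "0 < i" using jik t by (auto simp: len nth_delim split: if_splits)
  moreover have "t \<le> length w" using jik t by (auto simp: len nth_delim split: if_splits)
  ultimately have "swappable_at w (t - 1)"
    using jik t unfolding swappable_at_def
    by (intro exI[of _ "j - 1"] exI[of _ "i - 1"] exI[of _ "k - 1"])
      (auto simp: len nth_delim split: if_splits)
  then show ?thesis using \<open>t \<le> length w\<close> jik by (intro exI[of _ "t - 1"]) auto
qed

lemma L_UNIQ_iff_not_swappable: "w \<in> L_UNIQ \<longleftrightarrow> \<not> (\<exists>t<length w. swappable_at w t)"
proof
  assume "w \<in> L_UNIQ"
  show "\<not> (\<exists>t<length w. swappable_at w t)"
  proof
    assume "\<exists>t<length w. swappable_at w t"
    then obtain y where y: "y \<noteq> w" "length y = length w" "hd y = hd w" "last y = last w"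
      "bigrams y = bigrams w"
      using swappable_at_bigram_twin by blast
    then have "y \<noteq> []" "w \<noteq> []" using \<open>\<exists>t<length w. swappable_at w t\<close> by auto
    then have "bigram_vec (delim y) = bigram_vec (delim w)"
      using y by (simp add: bigram_vec_eq_iff_bigrams bigrams_delim)
    moreover have "delim y \<noteq> delim w" using y(1) by (simp add: delim_def)
    ultimately show False using \<open>w \<in> L_UNIQ\<close> unfolding L_UNIQ_def by blast
  qed
next
  assume no_swap: "\<not> (\<exists>t<length w. swappable_at w t)"
  show "w \<in> L_UNIQ"
    unfolding L_UNIQ_def
  proof (intro CollectI allI impI)
    fix x assume "(\<exists>u. x = delim u) \<and> bigram_vec x = bigram_vec (delim w)"
    then obtain u where x: "x = delim u" and bg: "bigrams (delim w) = bigrams (delim u)"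
      by (auto simp: bigram_vec_eq_iff_bigrams)
    have "length (delim w) = length (delim u)"
      using arg_cong[OF bg, of size] by (simp add: size_bigrams delim_def)
    moreover have "last (delim w) = last (delim u)" by (simp add: delim_def)
    ultimately show "x = delim w"
      using bigram_twins_swappable_at[of "delim w" "delim u"] swappable_at_delim no_swap bg x
      by metis
  qed
qed

definition prefix_graph :: "'b list \<Rightarrow> nat \<Rightarrow> ('b \<times> 'b) set" where
  "prefix_graph w t = {(w ! (s - 1), w ! s) | s. 1 \<le> s \<and> s < t}"

lemma mem_prefix_graph:
  "(x, y) \<in> prefix_graph w t \<longleftrightarrow> (\<exists>s. 1 \<le> s \<and> s < t \<and> w ! (s - 1) = x \<and> w ! s = y)"
  unfolding prefix_graph_def by auto

lemma prefix_graph_edge: "1 \<le> s \<Longrightarrow> s < t \<Longrightarrow> (w ! (s - 1), w ! s) \<in> prefix_graph w t"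
  unfolding mem_prefix_graph by blast

lemma prefix_graph_Suc: "1 \<le> t \<Longrightarrow> prefix_graph w (Suc t) = insert (w ! (t - 1), w ! t) (prefix_graph w t)"
  unfolding prefix_graph_def by (auto simp: less_Suc_eq)

lemma prefix_graph_rtrancl: "a \<le> b \<Longrightarrow> b < t \<Longrightarrow> (w ! a, w ! b) \<in> (prefix_graph w t)\<^sup>*"
proof (induction b rule: dec_induct)
  case base
  then show ?case by simp
next
  case (step b)
  then have "(w ! b, w ! Suc b) \<in> prefix_graph w t"
    using prefix_graph_edge[of "Suc b" t w] by simp
  with step show ?case by (meson Suc_lessD rtrancl_into_rtrancl)
qed

lemma prefix_graph_trancl:
  assumes "a < b" "b < t"
  shows "(w ! a, w ! b) \<in> (prefix_graph w t)\<^sup>+"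
proof -
  have "(w ! a, w ! (b - 1)) \<in> (prefix_graph w t)\<^sup>*" using assms by (simp add: prefix_graph_rtrancl)
  moreover have "(w ! (b - 1), w ! b) \<in> prefix_graph w t" using assms by (intro prefix_graph_edge) auto
  ultimately show ?thesis by (rule rtrancl_into_trancl1)
qed

lemma prefix_graph_straddle_cycle:
  assumes "1 \<le> j" "i < j" "j \<le> k" "k < t" "w ! i = w ! k"
  shows "(w ! j, w ! j) \<in> (prefix_graph w t)\<^sup>+"
proof -
  have "(w ! j, w ! k) \<in> (prefix_graph w t)\<^sup>*" "(w ! i, w ! (j - 1)) \<in> (prefix_graph w t)\<^sup>*"
    using assms(1-4) by (simp_all add: prefix_graph_rtrancl)
  then have "(w ! j, w ! (j - 1)) \<in> (prefix_graph w t)\<^sup>*" using assms(5) rtrancl_trans by metis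
  moreover have "(w ! (j - 1), w ! j) \<in> prefix_graph w t" using assms by (intro prefix_graph_edge) auto
  ultimately show ?thesis by (rule rtrancl_into_trancl1)
qed

lemma separated_at_reach:
  assumes sep: "separated_at w j t" and a: "j \<le> a" "a < t"
    and reach: "(w ! a, y) \<in> (prefix_graph w t)\<^sup>*"
  shows "\<exists>b. j \<le> b \<and> b < t \<and> w ! b = y"
  using reach
proof (induction rule: rtrancl_induct)
  case base
  then show ?case using a by auto
next
  case (step y z)
  then obtain b where b: "j \<le> b" "b < t" "w ! b = y" by auto
  from step(2) obtain s where s: "1 \<le> s" "s < t" "w ! (s - 1) = y" "w ! s = z"
    by (auto simp: mem_prefix_graph)
  have "\<not> s - 1 < j" using sep b s unfolding separated_at_def by metis
  then show ?case using s by (intro exI[of _ s]) auto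
qed

lemma separated_at_not_reach_pred:
  assumes sep: "separated_at w j t" and "1 \<le> j" "j \<le> a" "a < t"
  shows "(w ! a, w ! (j - 1)) \<notin> (prefix_graph w t)\<^sup>*"
proof
  assume "(w ! a, w ! (j - 1)) \<in> (prefix_graph w t)\<^sup>*"
  then obtain b where "j \<le> b" "b < t" "w ! b = w ! (j - 1)"
    using separated_at_reach[OF sep] assms(3,4) by blast
  moreover have "j - 1 < j" using \<open>1 \<le> j\<close> by simp
  ultimately show False using sep unfolding separated_at_def by metis
qed

lemma swappable_at_cyclic: "swappable_at w t \<Longrightarrow> (w ! t, w ! t) \<in> (prefix_graph w t)\<^sup>+"
  unfolding swappable_at_def using prefix_graph_straddle_cycle by metis

lemma cyclic_new_edge_swappable_at:
  assumes cyc: "(w ! t, w ! t) \<in> (prefix_graph w t)\<^sup>+"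
    and new: "(w ! (t - 1), w ! t) \<notin> prefix_graph w t"
  shows "swappable_at w t"
proof -
  obtain y where y: "(w ! t, y) \<in> (prefix_graph w t)\<^sup>*" "(y, w ! t) \<in> prefix_graph w t"
    using tranclD2[OF cyc] by blast
  from y(2) obtain s where s: "1 \<le> s" "s < t" "w ! (s - 1) = y" "w ! s = w ! t"
    by (auto simp: mem_prefix_graph)
  have "y \<noteq> w ! (t - 1)" using new y(2) by auto
  moreover have "\<not> separated_at w s t"
    using separated_at_not_reach_pred[of w s t s] y s by auto
  ultimately show ?thesis using s by (intro swappable_at_of_separated) auto
qed

definition two_in_edges_same_scc :: "('b \<times> 'b) set \<Rightarrow> 'b \<Rightarrow> bool" where
  "two_in_edges_same_scc G c \<longleftrightarrow> (\<exists>a b. a \<noteq> b \<and> (a, c) \<in> G \<and> (b, c) \<in> G \<and> same_scc G a b)"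

lemma swappable_at_of_two_in_edges:
  assumes "1 \<le> lo" "lo < hi" "hi < t" "w ! lo = w ! t" "w ! hi = w ! t"
    and pred_ne: "w ! (lo - 1) \<noteq> w ! (hi - 1)"
    and reach: "(w ! (hi - 1), w ! (lo - 1)) \<in> (prefix_graph w t)\<^sup>*"
  shows "swappable_at w t"
proof (cases "w ! (hi - 1) = w ! (t - 1)")
  case False
  then show ?thesis unfolding swappable_at_def using assms
    by (intro exI[of _ hi] exI[of _ lo] exI[of _ hi]) auto
next
  case True
  have "\<not> separated_at w lo t"
    using separated_at_not_reach_pred[of w lo t "hi - 1"] reach assms(1-3) by fastforce
  then show ?thesis using assms True by (intro swappable_at_of_separated) auto
qed

lemma two_in_edges_same_scc_swappable_at:
  assumes "two_in_edges_same_scc (prefix_graph w t) (w ! t)"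
  shows "swappable_at w t"
proof -
  obtain a b where ab: "a \<noteq> b" "(a, w ! t) \<in> prefix_graph w t" "(b, w ! t) \<in> prefix_graph w t"
    "same_scc (prefix_graph w t) a b"
    using assms unfolding two_in_edges_same_scc_def by blast
  obtain sa where sa: "1 \<le> sa" "sa < t" "w ! (sa - 1) = a" "w ! sa = w ! t"
    using ab(2) by (auto simp: mem_prefix_graph)
  obtain sb where sb: "1 \<le> sb" "sb < t" "w ! (sb - 1) = b" "w ! sb = w ! t"
    using ab(3) by (auto simp: mem_prefix_graph)
  have "sa \<noteq> sb" using ab sa sb by auto
  then consider "sa < sb" | "sb < sa" by linarith
  then show ?thesis
  proof cases
    case 1
    then show ?thesis using ab sa sb unfolding same_scc_def
      by (intro swappable_at_of_two_in_edges[of sa sb]) auto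
  next
    case 2
    then show ?thesis using ab sa sb unfolding same_scc_def
      by (intro swappable_at_of_two_in_edges[of sb sa]) auto
  qed
qed

lemma first_swappable_at_two_in_edges_same_scc:
  assumes first: "\<forall>s<t. \<not> swappable_at w s" and swap: "swappable_at w t"
    and old_edge: "(w ! (t - 1), w ! t) \<in> prefix_graph w t"
  shows "two_in_edges_same_scc (prefix_graph w t) (w ! t)"
proof -
  let ?G = "prefix_graph w t"
  obtain j i k where jik: "1 \<le> j" "j < t" "w ! j = w ! t" "w ! (j - 1) \<noteq> w ! (t - 1)"
    "i < j" "j \<le> k" "k < t" "w ! i = w ! k"
    using swap unfolding swappable_at_def by blast
  obtain s where s: "1 \<le> s" "s < t" "w ! (s - 1) = w ! (t - 1)" "w ! s = w ! t"
    using old_edge by (auto simp: mem_prefix_graph)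
  have "(w ! (j - 1), w ! t) \<in> ?G" using prefix_graph_edge[of j t w] jik by simp
  moreover have "(w ! (j - 1), w ! (t - 1)) \<in> ?G\<^sup>*" using jik by (intro prefix_graph_rtrancl) auto
  moreover have "(w ! (t - 1), w ! (j - 1)) \<in> ?G\<^sup>*"
  proof (cases "s \<le> j")
    case True
    then show ?thesis using jik s prefix_graph_rtrancl[of "s - 1" "j - 1" t w] by simp
  next
    case False
    have "s \<le> k" \<comment> \<open>otherwise a swap would already end at s\<close>
    proof (rule ccontr)
      assume "\<not> s \<le> k"
      then have "swappable_at w s" unfolding swappable_at_def using jik s False
        by (intro exI[of _ j] exI[of _ i] exI[of _ k]) auto
      then show False using first s by blast
    qed
    then have "(w ! (s - 1), w ! k) \<in> ?G\<^sup>*" using jik by (intro prefix_graph_rtrancl) auto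
    moreover have "(w ! i, w ! (j - 1)) \<in> ?G\<^sup>*" using jik by (intro prefix_graph_rtrancl) auto
    ultimately show ?thesis using s jik by (metis rtrancl_trans)
  qed
  ultimately show ?thesis
    using jik old_edge unfolding two_in_edges_same_scc_def same_scc_def by blast
qed

definition cyclic_vertices :: "('b \<times> 'b) set \<Rightarrow> 'b set" where
  "cyclic_vertices G = {x. (x, x) \<in> G\<^sup>+}"

lemma cyclic_vertices_insert:
  "cyclic_vertices (insert (p, c) G) = cyclic_vertices G \<union> {x. (x, p) \<in> G\<^sup>* \<and> (c, x) \<in> G\<^sup>*}"
  unfolding cyclic_vertices_def trancl_insert by auto

lemma cyclic_vertices_insert_fresh:
  assumes "c \<notin> Domain G" "p \<noteq> c"
  shows "cyclic_vertices (insert (p, c) G) = cyclic_vertices G"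
proof -
  have "x = c" if "(c, x) \<in> G\<^sup>*" for x
    using that assms(1) by (auto elim: converse_rtranclE)
  then show ?thesis using assms(2) by (auto simp: cyclic_vertices_insert)
qed

lemma not_cyclic_separated_at:
  assumes "j < t" "w ! j = w ! t" "w ! t \<notin> cyclic_vertices (prefix_graph w t)"
  shows "separated_at w j t"
  unfolding separated_at_def
proof (intro allI impI notI)
  fix i k assume "i < j" "j \<le> k" "k < t" "w ! i = w ! k"
  then have "(w ! j, w ! j) \<in> (prefix_graph w t)\<^sup>+" using prefix_graph_straddle_cycle[of j i k t w] by simp
  then show False using assms by (simp add: cyclic_vertices_def)
qed

lemma not_cyclic_prev_occ:
  assumes j: "j < t" "w ! j = w ! t" and acyclic: "w ! t \<notin> cyclic_vertices (prefix_graph w t)"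
  shows "prev_occ w t = j"
proof -
  have "j' = j" if "j' < t" "w ! j' = w ! t" for j'
  proof (rule ccontr)
    assume "j' \<noteq> j"
    then have "(w ! t, w ! t) \<in> (prefix_graph w t)\<^sup>+"
      using prefix_graph_trancl[of j' j t w] prefix_graph_trancl[of j j' t w] that j
      by (cases "j' < j") auto
    then show False using acyclic by (simp add: cyclic_vertices_def)
  qed
  then have "{j'. j' < t \<and> w ! j' = w ! t} = {j}" using j by blast
  then show ?thesis by (simp add: prev_occ_def)
qed

lemma cyclic_vertices_insert_prefix_edge:
  assumes j: "j < t" "w ! j = w ! t" and acyclic: "w ! t \<notin> cyclic_vertices (prefix_graph w t)"
  shows "cyclic_vertices (insert (w ! (t - 1), w ! t) (prefix_graph w t)) =
           cyclic_vertices (prefix_graph w t) \<union> {w ! t} \<union> {w ! i | i. prev_occ w t < i \<and> i < t}"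
proof -
  let ?G = "prefix_graph w t"
  have sep: "separated_at w j t" using not_cyclic_separated_at[OF assms] .
  have "(x, w ! (t - 1)) \<in> ?G\<^sup>* \<and> (w ! t, x) \<in> ?G\<^sup>* \<longleftrightarrow> (\<exists>b. j \<le> b \<and> b < t \<and> w ! b = x)" for x
  proof
    assume "(x, w ! (t - 1)) \<in> ?G\<^sup>* \<and> (w ! t, x) \<in> ?G\<^sup>*"
    then show "\<exists>b. j \<le> b \<and> b < t \<and> w ! b = x"
      using separated_at_reach[of w j t j x] sep j by auto
  next
    assume "\<exists>b. j \<le> b \<and> b < t \<and> w ! b = x"
    then obtain b where "j \<le> b" "b < t" "w ! b = x" by blast
    then show "(x, w ! (t - 1)) \<in> ?G\<^sup>* \<and> (w ! t, x) \<in> ?G\<^sup>*"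
      using prefix_graph_rtrancl[of j b t w] prefix_graph_rtrancl[of b "t - 1" t w] j by auto
  qed
  moreover have "(\<exists>b. j \<le> b \<and> b < t \<and> w ! b = x) \<longleftrightarrow> x = w ! t \<or> (\<exists>i. j < i \<and> i < t \<and> w ! i = x)"
    for x
    using j by (auto simp: le_less)
  ultimately show ?thesis
    using not_cyclic_prev_occ[OF assms] by (auto simp: cyclic_vertices_insert)
qed

lemma algA_step_Some:
  "algA_step w (Some (vis, cyc, G)) k =
     (if (w ! k \<in> vis \<and> (w ! (k - 1), w ! k) \<notin> G \<and> w ! k \<in> cyc)
         \<or> two_in_edges_same_scc G (w ! k) then None
      else Some (insert (w ! k) vis,
                 if w ! k \<notin> vis \<or> (w ! (k - 1), w ! k) \<in> G then cyc
                 else cyc \<union> {w ! k} \<union> {w ! j | j. prev_occ w k < j \<and> j < k},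
                 insert (w ! (k - 1), w ! k) G))"
  unfolding algA_step_def two_in_edges_same_scc_def Let_def by (auto simp: insert_absorb)

definition prefix_state :: "'a list \<Rightarrow> nat \<Rightarrow> ('a set \<times> 'a set \<times> ('a \<times> 'a) set) option" where
  "prefix_state w t = Some (set (take t w), cyclic_vertices (prefix_graph w t), prefix_graph w t)"

lemma algA_step_prefix_state:
  assumes t: "1 \<le> t" "t < length w" and first: "\<forall>s<t. \<not> swappable_at w s"
  shows "algA_step w (prefix_state w t) t = (if swappable_at w t then None else prefix_state w (Suc t))"
proof -
  let ?c = "w ! t" and ?p = "w ! (t - 1)" and ?G = "prefix_graph w t" and ?vis = "set (take t w)"
  note state_simps = prefix_state_def algA_step_Some prefix_graph_Suc[OF t(1)]
    take_Suc_conv_app_nth[OF t(2)]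
  have conflict: "two_in_edges_same_scc ?G ?c \<Longrightarrow> swappable_at w t"
    by (rule two_in_edges_same_scc_swappable_at)
  consider (fresh) "?c \<notin> ?vis" | (old_edge) "?c \<in> ?vis" "(?p, ?c) \<in> ?G"
    | (cyclic) "?c \<in> ?vis" "(?p, ?c) \<notin> ?G" "?c \<in> cyclic_vertices ?G"
    | (acyclic) "?c \<in> ?vis" "(?p, ?c) \<notin> ?G" "?c \<notin> cyclic_vertices ?G"
    by blast
  then show ?thesis
  proof cases
    case fresh
    then have earlier: "w ! j \<noteq> ?c" if "j < t" for j
      using that t by (auto simp: in_set_conv_nth)
    then have "\<not> swappable_at w t" unfolding swappable_at_def by blast
    moreover have "\<not> two_in_edges_same_scc ?G ?c" using conflict calculation by blast
    moreover have "?c \<notin> Domain ?G" using earlier by (fastforce simp: mem_prefix_graph)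
    moreover have "?p \<noteq> ?c" using earlier t by simp
    ultimately show ?thesis
      using fresh by (simp add: state_simps cyclic_vertices_insert_fresh)
  next
    case old_edge
    then have "two_in_edges_same_scc ?G ?c \<longleftrightarrow> swappable_at w t"
      using conflict first_swappable_at_two_in_edges_same_scc[OF first] by blast
    then show ?thesis using old_edge by (simp add: state_simps insert_absorb)
  next
    case cyclic
    then have "swappable_at w t"
      using cyclic_new_edge_swappable_at unfolding cyclic_vertices_def by blast
    then show ?thesis using cyclic by (simp add: state_simps)
  next
    case acyclic
    then obtain j where j: "j < t" "w ! j = ?c" using t by (auto simp: in_set_conv_nth)
    have "\<not> swappable_at w t"
      using acyclic swappable_at_cyclic unfolding cyclic_vertices_def by blast
    moreover have "\<not> two_in_edges_same_scc ?G ?c" using conflict calculation by blast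
    ultimately show ?thesis
      using acyclic cyclic_vertices_insert_prefix_edge[OF j acyclic(3)]
      by (simp add: state_simps insert_absorb)
  qed
qed

lemma algA_fold_prefix_state:
  assumes "1 \<le> t" "t \<le> length w"
  shows "fold (\<lambda>k s. algA_step w s k) [1..<t] (Some ({w ! 0}, {}, {})) =
         (if \<exists>s<t. swappable_at w s then None else prefix_state w t)"
  using assms
proof (induction t rule: dec_induct)
  case base
  have "w \<noteq> []" using assms by auto
  then have "prefix_graph w 1 = {}" "set (take 1 w) = {w ! 0}"
    by (auto simp: prefix_graph_def neq_Nil_conv)
  moreover have "\<not> swappable_at w 0" by (simp add: swappable_at_def)
  ultimately show ?case by (simp add: prefix_state_def cyclic_vertices_def)
next
  case (step t)
  have "algA_step w None t = None" by (simp add: algA_step_def)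
  moreover have "(\<exists>s<Suc t. swappable_at w s) \<longleftrightarrow> (\<exists>s<t. swappable_at w s) \<or> swappable_at w t"
    by (auto simp: less_Suc_eq)
  ultimately show ?case
    using step algA_step_prefix_state[of t w] by auto
qed

lemma algA_iff_not_swappable:
  assumes "w \<noteq> []"
  shows "algA w \<longleftrightarrow> \<not> (\<exists>t<length w. swappable_at w t)"
proof -
  have "1 \<le> length w" using assms by (simp add: Suc_leI)
  from algA_fold_prefix_state[OF this order.refl] show ?thesis
    by (simp add: algA_def prefix_state_def)
qed

theorem theorem2:
  fixes w :: "('a::finite) list"
  assumes "length w \<ge> 1"
  shows "algA w \<longleftrightarrow> w \<in> L_UNIQ"
proof -
  have "w \<noteq> []" using assms by auto
  then show ?thesis by (simp add: algA_iff_not_swappable L_UNIQ_iff_not_swappable)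
qed

end
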